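(* Let $C$ be a category with $C(x,y)$ finite for all objects $x,y$. Then $C$ is an essentially finite decomposition category if and only if $C$ is an isocyclic essentially locally finite category.
   Context: Two morphisms $f:x\to y$, $g:z\to w$ are isomorphic if there are isomorphisms $\alpha:x\to z$, $\beta:y\to w$ with $g\alpha=\beta f$; $\overline{f}$ is the class of $f$ and $\overline{C}_1$ the set of classes. For $n\ge1$, an $n$-decomposition of $\overline{f}$ is a tuple $(f_1,\dots,f_n)$ of composable morphisms such that $f_n\cdots f_1=\beta^{-1}f\alpha$ for some isomorphisms $\alpha,\beta$; $\mathrm{D}_n\overline{f}$ is the groupoid of these, with morphisms families of vertical isomorphisms $x_i\to z_i$ making all squares commute. For $n\ge2$, $\mathrm{PD}_n\overline{f}$ is the full subgroupoid of decompositions with no $f_i$ an isomorphism; $\mathrm{PD}_1\overline{f}=\mathrm{D}_1\overline{f}$; $\mathrm{PD}\overline{f}=\bigsqcup_n\mathrm{PD}_n\overline{f}$. $C$ is an essentially finite decomposition category if the set $\overline{\mathrm{PD}}\overline{f}$ of isomorphism classes of objects of $\mathrm{PD}\overline{f}$ is finite for every $\overline{f}$. $C$ is isocyclic if in any diagram $x\to y\to x$ both morphisms are isomorphisms; it is essentially locally finite if all hom-sets are finite, $x\to y\to x$ forces $x\cong y$, and $\{\overline{z}:\exists\ x\to z\to y\}$ (isomorphism classes of objects) is finite for all $x,y$. *)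

theory Defs
  imports Main
begin

text \<open>A (possibly large) category, given by a set of objects, a set of arrows,
domain/codomain maps, composition (comp g f = g after f) and identities.\<close>

record ('o, 'm) cat =
  Ob   :: "'o set"
  Ar   :: "'m set"
  dom  :: "'m \<Rightarrow> 'o"
  cod  :: "'m \<Rightarrow> 'o"
  comp :: "'m \<Rightarrow> 'm \<Rightarrow> 'm"
  idm  :: "'o \<Rightarrow> 'm"

definition hom :: "('o, 'm) cat \<Rightarrow> 'o \<Rightarrow> 'o \<Rightarrow> 'm set" where
  "hom C x y = {f \<in> Ar C. dom C f = x \<and> cod C f = y}"

definition category :: "('o, 'm) cat \<Rightarrow> bool" where
  "category C \<longleftrightarrow>
     (\<forall>f \<in> Ar C. dom C f \<in> Ob C \<and> cod C f \<in> Ob C) \<and>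
     (\<forall>x \<in> Ob C. idm C x \<in> hom C x x) \<and>
     (\<forall>f \<in> Ar C. \<forall>g \<in> Ar C. cod C f = dom C g \<longrightarrow>
         comp C g f \<in> hom C (dom C f) (cod C g)) \<and>
     (\<forall>f \<in> Ar C. comp C f (idm C (dom C f)) = f \<and> comp C (idm C (cod C f)) f = f) \<and>
     (\<forall>f \<in> Ar C. \<forall>g \<in> Ar C. \<forall>h \<in> Ar C. cod C f = dom C g \<longrightarrow> cod C g = dom C h \<longrightarrow>
         comp C h (comp C g f) = comp C (comp C h g) f)"

definition iso :: "('o, 'm) cat \<Rightarrow> 'm \<Rightarrow> bool" where
  "iso C f \<longleftrightarrow> f \<in> Ar C \<and>
     (\<exists>g \<in> hom C (cod C f) (dom C f).
        comp C g f = idm C (dom C f) \<and> comp C f g = idm C (cod C f))"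

definition obj_iso :: "('o, 'm) cat \<Rightarrow> 'o \<Rightarrow> 'o \<Rightarrow> bool" where
  "obj_iso C x y \<longleftrightarrow> (\<exists>f \<in> hom C x y. iso C f)"

fun composite :: "('o, 'm) cat \<Rightarrow> 'm list \<Rightarrow> 'm" where
  "composite C [] = undefined"
| "composite C [f] = f"
| "composite C (f # fs) = comp C (composite C fs) f"

definition composable :: "('o, 'm) cat \<Rightarrow> 'm list \<Rightarrow> bool" where
  "composable C fs \<longleftrightarrow> fs \<noteq> [] \<and> set fs \<subseteq> Ar C \<and>
     (\<forall>i. Suc i < length fs \<longrightarrow> cod C (fs ! i) = dom C (fs ! Suc i))"

text \<open>n-decompositions of the class of f: composable (f1,...,fn) with
  fn...f1 = beta^-1 f alpha for isomorphisms alpha, beta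
  (equivalently beta (fn...f1) = f alpha).\<close>
definition D :: "('o, 'm) cat \<Rightarrow> nat \<Rightarrow> 'm \<Rightarrow> 'm list set" where
  "D C n f = {fs. length fs = n \<and> composable C fs \<and>
     (\<exists>\<alpha> \<beta>. \<alpha> \<in> hom C (dom C (hd fs)) (dom C f) \<and> iso C \<alpha> \<and>
            \<beta> \<in> hom C (cod C (last fs)) (cod C f) \<and> iso C \<beta> \<and>
            comp C \<beta> (composite C fs) = comp C f \<alpha>)}"

definition PD_n :: "('o, 'm) cat \<Rightarrow> nat \<Rightarrow> 'm \<Rightarrow> 'm list set" where
  "PD_n C n f = (if n = 1 then D C 1 f
                 else {fs \<in> D C n f. \<forall>g \<in> set fs. \<not> iso C g})"

definition PD :: "('o, 'm) cat \<Rightarrow> 'm \<Rightarrow> 'm list set" where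
  "PD C f = (\<Union>n \<in> {1..}. PD_n C n f)"

text \<open>Isomorphism of decompositions (morphism in the groupoid D_n):
  a family of vertical isomorphisms phi_0, ..., phi_n between the objects
  x_0 \<rightarrow> x_1 \<rightarrow> ... \<rightarrow> x_n and z_0 \<rightarrow> ... \<rightarrow> z_n making all squares commute.\<close>
definition dec_iso :: "('o, 'm) cat \<Rightarrow> 'm list \<Rightarrow> 'm list \<Rightarrow> bool" where
  "dec_iso C fs gs \<longleftrightarrow> length fs = length gs \<and>
     (\<exists>\<phi> :: nat \<Rightarrow> 'm.
        \<phi> 0 \<in> hom C (dom C (fs ! 0)) (dom C (gs ! 0)) \<and>
        (\<forall>i < length fs. \<phi> (Suc i) \<in> hom C (cod C (fs ! i)) (cod C (gs ! i))) \<and>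
        (\<forall>i \<le> length fs. iso C (\<phi> i)) \<and>
        (\<forall>i < length fs. comp C (\<phi> (Suc i)) (fs ! i) = comp C (gs ! i) (\<phi> i)))"

definition ess_finite_decomposition :: "('o, 'm) cat \<Rightarrow> bool" where
  "ess_finite_decomposition C \<longleftrightarrow>
     (\<forall>f \<in> Ar C. finite (PD C f // {(d, e). d \<in> PD C f \<and> e \<in> PD C f \<and> dec_iso C d e}))"

definition isocyclic :: "('o, 'm) cat \<Rightarrow> bool" where
  "isocyclic C \<longleftrightarrow>
     (\<forall>x \<in> Ob C. \<forall>y \<in> Ob C. \<forall>f \<in> hom C x y. \<forall>g \<in> hom C y x. iso C f \<and> iso C g)"

definition ess_locally_finite :: "('o, 'm) cat \<Rightarrow> bool" where
  "ess_locally_finite C \<longleftrightarrow>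
     (\<forall>x \<in> Ob C. \<forall>y \<in> Ob C. finite (hom C x y)) \<and>
     (\<forall>x \<in> Ob C. \<forall>y \<in> Ob C. hom C x y \<noteq> {} \<longrightarrow> hom C y x \<noteq> {} \<longrightarrow> obj_iso C x y) \<and>
     (\<forall>x \<in> Ob C. \<forall>y \<in> Ob C.
        finite ({z \<in> Ob C. hom C x z \<noteq> {} \<and> hom C z y \<noteq> {}}
                // {(a, b). a \<in> Ob C \<and> b \<in> Ob C \<and> obj_iso C a b}))"

end

theory Submission
  imports Defs
begin

text \<open>
  (\<Leftarrow>, finite_PD_classes) In an isocyclic category the objects of a proper decomposition
  of f are pairwise non-isomorphic and lie between dom f and cod f. Conjugating, every
  proper decomposition is isomorphic to one of bounded length through a fixed finite set
  of representative objects, and there are only finitely many such chains.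

  (\<Rightarrow>, isocyclic_if_finite_PD_classes) If an endomorphism e of w is not invertible, the
  powers of e in the finite monoid End(w) are eventually periodic, e^a = e^(a+tp), and
  the constant chains [e, ..., e] of lengths a+tp are pairwise non-isomorphic proper
  decompositions of e^a. So all endomorphisms are invertible, which forces every
  x \<rightarrow> y \<rightarrow> x to consist of isomorphisms.
  (\<Rightarrow>, locally_finite_if_finite_PD_classes) A factorisation x \<rightarrow> z \<rightarrow> y by
  non-isomorphisms is a proper 2-decomposition of an arrow x \<rightarrow> y, whose class
  determines the class of z.
\<close>

lemma finite_quotient_by_representatives:
  assumes "equiv A R" "finite S" "\<forall>a \<in> A. \<exists>s \<in> S. (a, s) \<in> R"
  shows "finite (A // R)"
proof -
  have "A // R \<subseteq> (\<lambda>s. R``{s}) ` S"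
  proof
    fix K assume "K \<in> A // R"
    then obtain a where K: "K = R``{a}" and a: "a \<in> A" by (auto elim: quotientE)
    then obtain s where "s \<in> S" "(a, s) \<in> R" using assms(3) by blast
    then show "K \<in> (\<lambda>s. R``{s}) ` S" using K equiv_class_eq[OF assms(1)] by blast
  qed
  then show ?thesis using assms(2) finite_surj by blast
qed

definition obj_iso_rel :: "('o, 'm) cat \<Rightarrow> ('o \<times> 'o) set" where
  "obj_iso_rel C = {(a, b). a \<in> Ob C \<and> b \<in> Ob C \<and> obj_iso C a b}"

definition PD_rel :: "('o, 'm) cat \<Rightarrow> 'm \<Rightarrow> ('m list \<times> 'm list) set" where
  "PD_rel C f = {(d, e). d \<in> PD C f \<and> e \<in> PD C f \<and> dec_iso C d e}"

primrec epow :: "('o, 'm) cat \<Rightarrow> 'm \<Rightarrow> 'o \<Rightarrow> nat \<Rightarrow> 'm" where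
  "epow C e w 0 = idm C w"
| "epow C e w (Suc k) = comp C (epow C e w k) e"

locale category_ctx =
  fixes C :: "('o, 'm) cat"
  assumes cat: "category C"
begin

lemma hom_iff: "f \<in> hom C x y \<longleftrightarrow> f \<in> Ar C \<and> dom C f = x \<and> cod C f = y"
  by (simp add: hom_def)

lemma arrow_hom: "f \<in> Ar C \<Longrightarrow> f \<in> hom C (dom C f) (cod C f)"
  by (simp add: hom_iff)

lemma dom_cod_ob: "\<forall>f \<in> Ar C. dom C f \<in> Ob C \<and> cod C f \<in> Ob C"
  using cat unfolding category_def by (elim conjE) assumption
lemma id_in_hom: "\<forall>x \<in> Ob C. idm C x \<in> hom C x x"
  using cat unfolding category_def by (elim conjE) assumption
lemma comp_in_hom: "\<forall>f \<in> Ar C. \<forall>g \<in> Ar C. cod C f = dom C g \<longrightarrow>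
         comp C g f \<in> hom C (dom C f) (cod C g)"
  using cat unfolding category_def by (elim conjE) assumption
lemma id_neutral: "\<forall>f \<in> Ar C. comp C f (idm C (dom C f)) = f \<and> comp C (idm C (cod C f)) f = f"
  using cat unfolding category_def by (elim conjE) assumption
lemma comp_assoc: "\<forall>f \<in> Ar C. \<forall>g \<in> Ar C. \<forall>h \<in> Ar C. cod C f = dom C g \<longrightarrow> cod C g = dom C h \<longrightarrow>
         comp C h (comp C g f) = comp C (comp C h g) f"
  using cat unfolding category_def by (elim conjE) assumption

lemma dom_ob: "f \<in> Ar C \<Longrightarrow> dom C f \<in> Ob C"
  and cod_ob: "f \<in> Ar C \<Longrightarrow> cod C f \<in> Ob C"
  using dom_cod_ob by blast+

lemma id_hom: "x \<in> Ob C \<Longrightarrow> idm C x \<in> hom C x x"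
  using id_in_hom by blast

lemma comp_hom: "f \<in> hom C x y \<Longrightarrow> g \<in> hom C y z \<Longrightarrow> comp C g f \<in> hom C x z"
  using comp_in_hom unfolding hom_iff by metis

lemma id_r: "f \<in> hom C x y \<Longrightarrow> comp C f (idm C x) = f"
  and id_l: "f \<in> hom C x y \<Longrightarrow> comp C (idm C y) f = f"
  using id_neutral unfolding hom_iff by metis+

lemma assoc: "f \<in> hom C x y \<Longrightarrow> g \<in> hom C y z \<Longrightarrow> h \<in> hom C z w \<Longrightarrow>
   comp C h (comp C g f) = comp C (comp C h g) f"
  using comp_assoc unfolding hom_iff by metis

lemma iso_id: "x \<in> Ob C \<Longrightarrow> iso C (idm C x)"
  unfolding iso_def using id_hom[of x] id_l[of "idm C x" x x] by (auto simp: hom_iff)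

definition inv_arr :: "'m \<Rightarrow> 'm" where
  "inv_arr f = (SOME g. g \<in> hom C (cod C f) (dom C f) \<and>
        comp C g f = idm C (dom C f) \<and> comp C f g = idm C (cod C f))"

lemma inv_arr: assumes "iso C f" "f \<in> hom C x y"
  shows "inv_arr f \<in> hom C y x" "comp C (inv_arr f) f = idm C x" "comp C f (inv_arr f) = idm C y"
proof -
  have "\<exists>g. g \<in> hom C (cod C f) (dom C f) \<and>
        comp C g f = idm C (dom C f) \<and> comp C f g = idm C (cod C f)"
    using assms(1) unfolding iso_def by blast
  from someI_ex[OF this] assms(2)
  show "inv_arr f \<in> hom C y x" "comp C (inv_arr f) f = idm C x" "comp C f (inv_arr f) = idm C y"
    unfolding inv_arr_def by (auto simp: hom_iff)
qed

lemma iso_inv: assumes "iso C f" "f \<in> hom C x y" shows "iso C (inv_arr f)"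
  unfolding iso_def using inv_arr[OF assms] assms by (auto simp: hom_iff)

lemma iso_comp: assumes "iso C f" "f \<in> hom C x y" "iso C g" "g \<in> hom C y z"
  shows "iso C (comp C g f)"
proof -
  note F = inv_arr[OF assms(1,2)] and G = inv_arr[OF assms(3,4)]
  let ?h = "comp C (inv_arr f) (inv_arr g)"
  have gf: "comp C g f \<in> hom C x z" using comp_hom assms by blast
  have h: "?h \<in> hom C z x" using comp_hom F G by blast
  have "comp C ?h (comp C g f) = comp C (inv_arr f) (comp C (comp C (inv_arr g) g) f)"
    using assoc[OF gf G(1) F(1)] assoc[OF assms(2,4) G(1)] by simp
  then have left: "comp C ?h (comp C g f) = idm C x" using G(2) id_l assms(2) F(2) by simp
  have "comp C (comp C g f) ?h = comp C g (comp C (comp C f (inv_arr f)) (inv_arr g))"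
    using assoc[OF h assms(2,4)] assoc[OF G(1) F(1) assms(2)] by simp
  then have right: "comp C (comp C g f) ?h = idm C z" using F(3) id_l G(1) G(3) by simp
  show ?thesis unfolding iso_def using gf h left right by (auto simp: hom_iff)
qed

lemma square_inv:
  assumes a: "a \<in> hom C p q" and b: "b \<in> hom C p' q'" and f: "f \<in> hom C p p'" "iso C f"
    and g: "g \<in> hom C q q'" "iso C g" and sq: "comp C g a = comp C b f"
  shows "comp C (inv_arr g) b = comp C a (inv_arr f)"
proof -
  note F = inv_arr[OF f(2,1)] and G = inv_arr[OF g(2,1)]
  have "comp C (inv_arr g) b = comp C (inv_arr g) (comp C (comp C b f) (inv_arr f))"
    using F(3) id_r b assoc[OF F(1) f(1) b] by simp
  also have "\<dots> = comp C (comp C (inv_arr g) g) (comp C a (inv_arr f))"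
    using assoc[OF F(1) a g(1)] sq assoc[OF comp_hom[OF F(1) a] g(1) G(1)] by simp
  also have "\<dots> = comp C a (inv_arr f)" using G(2) id_l comp_hom[OF F(1) a] by simp
  finally show ?thesis .
qed

lemma square_comp:
  assumes a: "a \<in> hom C p q" and b: "b \<in> hom C p' q'" and c: "c \<in> hom C p'' q''"
    and f: "f \<in> hom C p p'" and g: "g \<in> hom C q q'"
    and f': "f' \<in> hom C p' p''" and g': "g' \<in> hom C q' q''"
    and sq: "comp C g a = comp C b f" and sq': "comp C g' b = comp C c f'"
  shows "comp C (comp C g' g) a = comp C c (comp C f' f)"
proof -
  have "comp C (comp C g' g) a = comp C (comp C g' b) f"
    using assoc[OF a g g'] sq assoc[OF f b g'] by simp
  also have "\<dots> = comp C c (comp C f' f)" using sq' assoc[OF f f' c] by simp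
  finally show ?thesis .
qed

lemma iso_of_square:
  assumes a: "a \<in> hom C p q" and b: "b \<in> hom C p' q'" and f: "f \<in> hom C p p'" "iso C f"
    and g: "g \<in> hom C q q'" "iso C g" and sq: "comp C g a = comp C b f" and bi: "iso C b"
  shows "iso C a"
proof -
  note F = inv_arr[OF f(2,1)] and G = inv_arr[OF g(2,1)]
  have "a = comp C (comp C a (inv_arr f)) f"
    using F(2) id_r a assoc[OF f(1) F(1) a] by simp
  then have "a = comp C (comp C (inv_arr g) b) f" using square_inv[OF a b f g sq] by simp
  moreover have "iso C (comp C (inv_arr g) b)" using iso_comp[OF bi b iso_inv[OF g(2,1)] G(1)] .
  ultimately show ?thesis using iso_comp[OF f(2,1) _ comp_hom[OF b G(1)]] by metis
qed

text \<open>If both g f and f g are isomorphisms, so is f (f has a left and a right inverse).\<close>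
lemma iso_from_both:
  assumes f: "f \<in> hom C x y" and g: "g \<in> hom C y x"
    and gf: "iso C (comp C g f)" and fg: "iso C (comp C f g)"
  shows "iso C f"
proof -
  note I1 = inv_arr[OF gf comp_hom[OF f g]] and I2 = inv_arr[OF fg comp_hom[OF g f]]
  define u where "u = comp C (inv_arr (comp C g f)) g"
  define v where "v = comp C g (inv_arr (comp C f g))"
  have u: "u \<in> hom C y x" unfolding u_def using comp_hom[OF g I1(1)] .
  have v: "v \<in> hom C y x" unfolding v_def using comp_hom[OF I2(1) g] .
  have uf: "comp C u f = idm C x" unfolding u_def using assoc[OF f g I1(1)] I1(2) by simp
  have fv: "comp C f v = idm C y" unfolding v_def using assoc[OF I2(1) g f] I2(3) by simp
  have "u = comp C (comp C u f) v" using fv id_r u assoc[OF v f u] by simp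
  then have "u = v" using uf id_l v by simp
  then show ?thesis unfolding iso_def using f u uf fv by (auto simp: hom_iff)
qed

lemma obj_iso_ob: "obj_iso C x y \<Longrightarrow> x \<in> Ob C \<and> y \<in> Ob C"
  unfolding obj_iso_def hom_def using dom_ob cod_ob by blast

lemma obj_iso_sym: "obj_iso C x y \<Longrightarrow> obj_iso C y x"
  unfolding obj_iso_def by (metis inv_arr(1) iso_inv)

lemma obj_iso_trans: "obj_iso C x y \<Longrightarrow> obj_iso C y z \<Longrightarrow> obj_iso C x z"
  unfolding obj_iso_def by (metis comp_hom iso_comp)

lemma equiv_obj_iso: "equiv (Ob C) (obj_iso_rel C)"
proof (rule equivI)
  show "obj_iso_rel C \<subseteq> Ob C \<times> Ob C" unfolding obj_iso_rel_def by auto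
  show "refl_on (Ob C) (obj_iso_rel C)"
    unfolding refl_on_def obj_iso_rel_def obj_iso_def using id_hom iso_id by blast
  show "sym (obj_iso_rel C)"
    unfolding sym_def obj_iso_rel_def using obj_iso_sym by blast
  show "trans (obj_iso_rel C)"
    unfolding trans_def obj_iso_rel_def using obj_iso_trans by blast
qed

lemma obj_iso_rel_iff: "(a, b) \<in> obj_iso_rel C \<longleftrightarrow> obj_iso C a b"
  unfolding obj_iso_rel_def using obj_iso_ob by blast

definition ob :: "'m list \<Rightarrow> nat \<Rightarrow> 'o" where
  "ob fs i = (if i = 0 then dom C (fs!0) else cod C (fs!(i-1)))"

lemma ob_0: "ob fs 0 = dom C (fs!0)" and ob_Suc: "ob fs (Suc i) = cod C (fs!i)"
  by (auto simp: ob_def)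

lemma ob_hd: "fs \<noteq> [] \<Longrightarrow> ob fs 0 = dom C (hd fs)"
  by (simp add: ob_def hd_conv_nth)

lemma ob_last: "fs \<noteq> [] \<Longrightarrow> ob fs (length fs) = cod C (last fs)"
  by (cases fs rule: rev_cases) (auto simp: ob_def nth_append)

lemma composable_Cons: "composable C (f # fs) \<longleftrightarrow>
   f \<in> Ar C \<and> (fs = [] \<or> (composable C fs \<and> cod C f = dom C (hd fs)))"
proof -
  have "(\<forall>i. Suc i < length (f # fs) \<longrightarrow> cod C ((f # fs) ! i) = dom C ((f # fs) ! Suc i))
    \<longleftrightarrow> (fs \<noteq> [] \<longrightarrow> cod C f = dom C (hd fs)) \<and>
        (\<forall>i. Suc i < length fs \<longrightarrow> cod C (fs ! i) = dom C (fs ! Suc i))"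
    by (auto simp: hd_conv_nth nth_Cons split: nat.splits)
  then show ?thesis unfolding composable_def by auto
qed

lemma ob_Cons: assumes "composable C (f # fs)" "fs \<noteq> []" shows "ob (f # fs) (Suc i) = ob fs i"
  using assms composable_Cons[of f fs] by (cases i) (auto simp: ob_def hd_conv_nth)

lemma composable_nth_hom: assumes "composable C fs" "i < length fs"
  shows "fs!i \<in> hom C (ob fs i) (ob fs (Suc i))"
proof -
  have "fs!i \<in> Ar C" using assms unfolding composable_def by auto
  moreover have "dom C (fs!i) = ob fs i"
  proof (cases i)
    case (Suc j) then show ?thesis using assms unfolding composable_def by (simp add: ob_Suc)
  qed (simp add: ob_0)
  ultimately show ?thesis by (simp add: hom_iff ob_Suc)
qed

lemma ob_Ob: assumes "composable C fs" "i \<le> length fs" shows "ob fs i \<in> Ob C"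
proof (cases i)
  case 0 then show ?thesis using assms dom_ob unfolding composable_def by (simp add: subset_iff ob_0)
next
  case (Suc j) then show ?thesis using assms cod_ob unfolding composable_def by (simp add: subset_iff ob_Suc)
qed

lemma chain_reach: assumes "composable C fs" "i \<le> j" "j \<le> length fs"
  shows "hom C (ob fs i) (ob fs j) \<noteq> {}"
  using assms(2,3)
proof (induction j)
  case 0 then show ?case using id_hom ob_Ob[OF assms(1)] by blast
next
  case (Suc j)
  show ?case
  proof (cases "i = Suc j")
    case True then show ?thesis using id_hom ob_Ob[OF assms(1) Suc.prems(2)] by blast
  next
    case False
    then obtain g where "g \<in> hom C (ob fs i) (ob fs j)" using Suc by force
    moreover have "fs!j \<in> hom C (ob fs j) (ob fs (Suc j))"
      using composable_nth_hom[OF assms(1)] Suc.prems by simp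
    ultimately show ?thesis using comp_hom by blast
  qed
qed

lemma composite_hom: "composable C fs \<Longrightarrow> composite C fs \<in> hom C (ob fs 0) (ob fs (length fs))"
proof (induction fs)
  case Nil then show ?case by (simp add: composable_def)
next
  case (Cons f fs)
  show ?case
  proof (cases fs)
    case Nil then show ?thesis using Cons.prems by (simp add: composable_def hom_iff ob_0 ob_Suc)
  next
    case (Cons g gs)
    have c: "composable C fs" "cod C f = dom C g" "f \<in> Ar C"
      using Cons.prems composable_Cons Cons by auto
    have "composite C fs \<in> hom C (dom C g) (cod C (fs ! (length fs - 1)))"
      using Cons.IH[OF c(1)] Cons by (simp add: ob_def)
    moreover have "f \<in> hom C (dom C f) (dom C g)" using c by (simp add: hom_iff)
    ultimately show ?thesis using Cons by (simp add: comp_hom ob_def)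
  qed
qed

definition arr_iso :: "'m \<Rightarrow> 'm \<Rightarrow> bool" where
  "arr_iso a b \<longleftrightarrow> a \<in> Ar C \<and> b \<in> Ar C \<and>
     (\<exists>\<alpha> \<beta>. \<alpha> \<in> hom C (dom C a) (dom C b) \<and> iso C \<alpha> \<and>
            \<beta> \<in> hom C (cod C a) (cod C b) \<and> iso C \<beta> \<and> comp C \<beta> a = comp C b \<alpha>)"

lemma arr_iso_sym: assumes "arr_iso a b" shows "arr_iso b a"
proof -
  obtain \<alpha> \<beta> where a: "a \<in> Ar C" and b: "b \<in> Ar C"
    and \<alpha>: "\<alpha> \<in> hom C (dom C a) (dom C b)" "iso C \<alpha>"
    and \<beta>: "\<beta> \<in> hom C (cod C a) (cod C b)" "iso C \<beta>" and sq: "comp C \<beta> a = comp C b \<alpha>"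
    using assms unfolding arr_iso_def by blast
  have "comp C (inv_arr \<beta>) b = comp C a (inv_arr \<alpha>)"
    using square_inv[OF arrow_hom[OF a] arrow_hom[OF b] \<alpha> \<beta> sq] .
  then show ?thesis unfolding arr_iso_def
    using a b inv_arr(1)[OF \<alpha>(2,1)] inv_arr(1)[OF \<beta>(2,1)] iso_inv[OF \<alpha>(2,1)] iso_inv[OF \<beta>(2,1)]
    by auto
qed

lemma arr_iso_trans: assumes "arr_iso a b" "arr_iso b c" shows "arr_iso a c"
proof -
  obtain \<alpha> \<beta> where a: "a \<in> Ar C" and b: "b \<in> Ar C"
    and \<alpha>: "\<alpha> \<in> hom C (dom C a) (dom C b)" "iso C \<alpha>"
    and \<beta>: "\<beta> \<in> hom C (cod C a) (cod C b)" "iso C \<beta>" and sq: "comp C \<beta> a = comp C b \<alpha>"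
    using assms(1) unfolding arr_iso_def by blast
  obtain \<alpha>' \<beta>' where c: "c \<in> Ar C"
    and \<alpha>': "\<alpha>' \<in> hom C (dom C b) (dom C c)" "iso C \<alpha>'"
    and \<beta>': "\<beta>' \<in> hom C (cod C b) (cod C c)" "iso C \<beta>'" and sq': "comp C \<beta>' b = comp C c \<alpha>'"
    using assms(2) unfolding arr_iso_def by blast
  have "comp C (comp C \<beta>' \<beta>) a = comp C c (comp C \<alpha>' \<alpha>)"
    using square_comp[OF arrow_hom[OF a] arrow_hom[OF b] arrow_hom[OF c] \<alpha>(1) \<beta>(1) \<alpha>'(1) \<beta>'(1) sq sq'] .
  then show ?thesis unfolding arr_iso_def
    using a c comp_hom[OF \<alpha>(1) \<alpha>'(1)] comp_hom[OF \<beta>(1) \<beta>'(1)]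
      iso_comp[OF \<alpha>(2,1) \<alpha>'(2,1)] iso_comp[OF \<beta>(2,1) \<beta>'(2,1)] by blast
qed

lemma D_iff: assumes "f \<in> Ar C"
  shows "d \<in> D C n f \<longleftrightarrow> length d = n \<and> composable C d \<and> arr_iso (composite C d) f"
proof (cases "composable C d")
  case True
  then have "composite C d \<in> hom C (dom C (hd d)) (cod C (last d))"
    using composite_hom[of d] ob_hd ob_last unfolding composable_def by auto
  then have "composite C d \<in> Ar C" "dom C (composite C d) = dom C (hd d)"
    "cod C (composite C d) = cod C (last d)" by (auto simp: hom_iff)
  then show ?thesis using assms unfolding D_def arr_iso_def by simp
next
  case False then show ?thesis unfolding D_def by simp
qed

lemma dec_iso_alt: "dec_iso C fs gs \<longleftrightarrow> length fs = length gs \<and>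
   (\<exists>\<phi>. (\<forall>i \<le> length fs. \<phi> i \<in> hom C (ob fs i) (ob gs i) \<and> iso C (\<phi> i)) \<and>
        (\<forall>i < length fs. comp C (\<phi> (Suc i)) (fs ! i) = comp C (gs ! i) (\<phi> i)))"
proof -
  have "\<And>\<phi>. (\<forall>i \<le> length fs. \<phi> i \<in> hom C (ob fs i) (ob gs i)) \<longleftrightarrow>
     \<phi> 0 \<in> hom C (dom C (fs ! 0)) (dom C (gs ! 0)) \<and>
        (\<forall>i < length fs. \<phi> (Suc i) \<in> hom C (cod C (fs ! i)) (cod C (gs ! i)))"
    by (metis (no_types, lifting) Suc_le_eq le0 not0_implies_Suc not_le ob_0 ob_Suc)
  then show ?thesis unfolding dec_iso_def by blast
qed

lemma dec_iso_refl: assumes "composable C fs" shows "dec_iso C fs fs"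
proof -
  define \<phi> where "\<phi> i = idm C (ob fs i)" for i
  have "\<forall>i \<le> length fs. \<phi> i \<in> hom C (ob fs i) (ob fs i) \<and> iso C (\<phi> i)"
    using ob_Ob[OF assms] id_hom iso_id unfolding \<phi>_def by blast
  moreover have "\<forall>i < length fs. comp C (\<phi> (Suc i)) (fs ! i) = comp C (fs ! i) (\<phi> i)"
    using composable_nth_hom[OF assms] id_l id_r unfolding \<phi>_def by metis
  ultimately show ?thesis unfolding dec_iso_alt by blast
qed

lemma dec_iso_sym: assumes "composable C fs" "composable C gs" "dec_iso C fs gs"
  shows "dec_iso C gs fs"
proof -
  obtain \<phi> where L: "length fs = length gs"
    and P: "\<forall>i \<le> length fs. \<phi> i \<in> hom C (ob fs i) (ob gs i) \<and> iso C (\<phi> i)"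
    and S: "\<forall>i < length fs. comp C (\<phi> (Suc i)) (fs ! i) = comp C (gs ! i) (\<phi> i)"
    using assms(3) unfolding dec_iso_alt by blast
  define \<psi> where "\<psi> i = inv_arr (\<phi> i)" for i
  have "\<forall>i \<le> length gs. \<psi> i \<in> hom C (ob gs i) (ob fs i) \<and> iso C (\<psi> i)"
    using P L inv_arr iso_inv unfolding \<psi>_def by metis
  moreover have "comp C (\<psi> (Suc i)) (gs ! i) = comp C (fs ! i) (\<psi> i)" if i: "i < length gs" for i
    unfolding \<psi>_def
    by (rule square_inv[OF composable_nth_hom[OF assms(1)] composable_nth_hom[OF assms(2)]])
      (use i L P S in auto)
  ultimately show ?thesis using L unfolding dec_iso_alt by auto
qed

lemma dec_iso_trans: assumes "composable C fs" "composable C gs" "composable C hs"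
  "dec_iso C fs gs" "dec_iso C gs hs" shows "dec_iso C fs hs"
proof -
  obtain \<phi> where L: "length fs = length gs"
    and P: "\<forall>i \<le> length fs. \<phi> i \<in> hom C (ob fs i) (ob gs i) \<and> iso C (\<phi> i)"
    and S: "\<forall>i < length fs. comp C (\<phi> (Suc i)) (fs ! i) = comp C (gs ! i) (\<phi> i)"
    using assms(4) unfolding dec_iso_alt by blast
  obtain \<psi> where L': "length gs = length hs"
    and P': "\<forall>i \<le> length gs. \<psi> i \<in> hom C (ob gs i) (ob hs i) \<and> iso C (\<psi> i)"
    and S': "\<forall>i < length gs. comp C (\<psi> (Suc i)) (gs ! i) = comp C (hs ! i) (\<psi> i)"
    using assms(5) unfolding dec_iso_alt by blast
  define \<chi> where "\<chi> i = comp C (\<psi> i) (\<phi> i)" for i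
  have "\<forall>i \<le> length fs. \<chi> i \<in> hom C (ob fs i) (ob hs i) \<and> iso C (\<chi> i)"
    using P P' L comp_hom iso_comp unfolding \<chi>_def by metis
  moreover have "comp C (\<chi> (Suc i)) (fs ! i) = comp C (hs ! i) (\<chi> i)" if i: "i < length fs" for i
    unfolding \<chi>_def
    by (rule square_comp[OF composable_nth_hom[OF assms(1)] composable_nth_hom[OF assms(2)]
          composable_nth_hom[OF assms(3)]])
      (use i L L' P S P' S' in auto)
  ultimately show ?thesis using L L' unfolding dec_iso_alt by auto
qed

lemma squares_tail:
  assumes cf: "composable C (f # fs)" and cg: "composable C (g # gs)"
    and ne: "fs \<noteq> []" "gs \<noteq> []" and L: "length fs = length gs"
    and P: "\<forall>i \<le> length (f # fs). \<phi> i \<in> hom C (ob (f # fs) i) (ob (g # gs) i)"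
    and S: "\<forall>i < length (f # fs). comp C (\<phi> (Suc i)) ((f # fs) ! i) = comp C ((g # gs) ! i) (\<phi> i)"
  shows "\<forall>i \<le> length fs. \<phi> (Suc i) \<in> hom C (ob fs i) (ob gs i)"
    and "\<forall>i < length fs. comp C (\<phi> (Suc (Suc i))) (fs ! i) = comp C (gs ! i) (\<phi> (Suc i))"
proof -
  have "ob (f # fs) (Suc i) = ob fs i" "ob (g # gs) (Suc i) = ob gs i" for i
    using ob_Cons cf cg ne by auto
  then show "\<forall>i \<le> length fs. \<phi> (Suc i) \<in> hom C (ob fs i) (ob gs i)" using P by force
  show "\<forall>i < length fs. comp C (\<phi> (Suc (Suc i))) (fs ! i) = comp C (gs ! i) (\<phi> (Suc i))"
    using S by force
qed

lemma composite_square: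
  assumes "composable C fs" "composable C gs" "length fs = length gs"
    "\<forall>i \<le> length fs. \<phi> i \<in> hom C (ob fs i) (ob gs i)"
    "\<forall>i < length fs. comp C (\<phi> (Suc i)) (fs ! i) = comp C (gs ! i) (\<phi> i)"
  shows "comp C (\<phi> (length fs)) (composite C fs) = comp C (composite C gs) (\<phi> 0)"
  using assms
proof (induction fs arbitrary: gs \<phi>)
  case Nil then show ?case by (simp add: composable_def)
next
  case (Cons f fs)
  obtain g gs' where gs: "gs = g # gs'" using Cons.prems(3) by (cases gs) auto
  show ?case
  proof (cases "fs = []")
    case True then show ?thesis using Cons.prems gs by simp
  next
    case False
    have ne: "gs' \<noteq> []" using Cons.prems(3) gs False by auto
    have cf: "composable C fs" using Cons.prems(1) composable_Cons False by auto
    have cg: "composable C gs'" using Cons.prems(2) composable_Cons gs ne by auto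
    note tail = squares_tail[OF Cons.prems(1) Cons.prems(2)[unfolded gs] False ne _
        Cons.prems(4,5)[unfolded gs]]
    have IH: "comp C (\<phi> (Suc (length fs))) (composite C fs) = comp C (composite C gs') (\<phi> 1)"
      using Cons.IH[OF cf cg _ tail] Cons.prems(3) gs by simp
    have f: "f \<in> hom C (ob (f#fs) 0) (ob fs 0)"
      using composable_nth_hom[OF Cons.prems(1), of 0] ob_Cons[OF Cons.prems(1) False] by simp
    have g: "g \<in> hom C (ob gs 0) (ob gs' 0)"
      using composable_nth_hom[OF Cons.prems(2), of 0] ob_Cons[OF Cons.prems(2)[unfolded gs] ne] gs
      by simp
    have Cf: "composite C fs \<in> hom C (ob fs 0) (ob fs (length fs))" using composite_hom[OF cf] .
    have Cg: "composite C gs' \<in> hom C (ob gs' 0) (ob gs' (length gs'))" using composite_hom[OF cg] .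
    have P0: "\<phi> 0 \<in> hom C (ob (f#fs) 0) (ob gs 0)" using Cons.prems(4) by auto
    have P1: "\<phi> 1 \<in> hom C (ob fs 0) (ob gs' 0)" using tail(1) Cons.prems(3) gs by auto
    have Pn: "\<phi> (Suc (length fs)) \<in> hom C (ob fs (length fs)) (ob gs' (length gs'))"
      using tail(1) Cons.prems(3) gs by auto
    have sq0: "comp C (\<phi> 1) f = comp C g (\<phi> 0)" using Cons.prems(5) gs by auto
    have "comp C (\<phi> (length (f # fs))) (composite C (f # fs))
        = comp C (comp C (\<phi> (Suc (length fs))) (composite C fs)) f"
      using False assoc[OF f Cf Pn] by (cases fs) auto
    also have "\<dots> = comp C (composite C gs') (comp C (\<phi> 1) f)" using IH assoc[OF f P1 Cg] by simp
    also have "\<dots> = comp C (comp C (composite C gs') g) (\<phi> 0)" using sq0 assoc[OF P0 g Cg] by simp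
    also have "\<dots> = comp C (composite C gs) (\<phi> 0)" using gs ne by (cases gs') auto
    finally show ?thesis .
  qed
qed

lemma dec_iso_arr_iso: assumes "composable C fs" "composable C gs" "dec_iso C fs gs"
  shows "arr_iso (composite C fs) (composite C gs)"
proof -
  obtain \<phi> where L: "length fs = length gs"
    and P: "\<forall>i \<le> length fs. \<phi> i \<in> hom C (ob fs i) (ob gs i) \<and> iso C (\<phi> i)"
    and S: "\<forall>i < length fs. comp C (\<phi> (Suc i)) (fs ! i) = comp C (gs ! i) (\<phi> i)"
    using assms(3) unfolding dec_iso_alt by blast
  have "comp C (\<phi> (length fs)) (composite C fs) = comp C (composite C gs) (\<phi> 0)"
    using composite_square[OF assms(1,2) L] P S by auto
  moreover have "composite C fs \<in> hom C (ob fs 0) (ob fs (length fs))"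
    "composite C gs \<in> hom C (ob gs 0) (ob gs (length fs))"
    using composite_hom[OF assms(1)] composite_hom[OF assms(2)] L by auto
  moreover have "\<phi> 0 \<in> hom C (ob fs 0) (ob gs 0)" "iso C (\<phi> 0)"
    "\<phi> (length fs) \<in> hom C (ob fs (length fs)) (ob gs (length fs))" "iso C (\<phi> (length fs))"
    using P by auto
  ultimately show ?thesis unfolding arr_iso_def by (auto simp: hom_iff)
qed

lemma D_transport:
  assumes d: "d \<in> D C n f" and s: "composable C s" and di: "dec_iso C d s" and fA: "f \<in> Ar C"
  shows "s \<in> D C n f"
proof -
  have "length d = n" "composable C d" "arr_iso (composite C d) f" using d D_iff[OF fA] by auto
  moreover have "length s = length d" using di unfolding dec_iso_def by simp
  ultimately show ?thesis
    using D_iff[OF fA] s arr_iso_trans arr_iso_sym[OF dec_iso_arr_iso[OF _ s di]] by metis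
qed

lemma PD_n_transport:
  assumes d: "d \<in> PD_n C n f" and s: "composable C s" and di: "dec_iso C d s" and fA: "f \<in> Ar C"
  shows "s \<in> PD_n C n f"
proof (cases "n = 1")
  case True then show ?thesis using d D_transport[OF _ s di fA] unfolding PD_n_def by auto
next
  case False
  have dD: "d \<in> D C n f" and ni: "\<forall>g \<in> set d. \<not> iso C g" using d False unfolding PD_n_def by auto
  have cd: "composable C d" using dD unfolding D_def by auto
  obtain \<phi> where L: "length d = length s"
    and P: "\<forall>i \<le> length d. \<phi> i \<in> hom C (ob d i) (ob s i) \<and> iso C (\<phi> i)"
    and S: "\<forall>i < length d. comp C (\<phi> (Suc i)) (d ! i) = comp C (s ! i) (\<phi> i)"
    using di unfolding dec_iso_alt by blast
  have "\<not> iso C (s ! i)" if i: "i < length s" for i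
  proof
    assume "iso C (s ! i)"
    then have "iso C (d ! i)"
      using iso_of_square[OF composable_nth_hom[OF cd] composable_nth_hom[OF s], of i i "\<phi> i" "\<phi> (Suc i)"]
        i L P S by auto
    then show False using ni i L by auto
  qed
  then have "\<forall>g \<in> set s. \<not> iso C g" by (auto simp: in_set_conv_nth)
  then show ?thesis using D_transport[OF dD s di fA] False unfolding PD_n_def by auto
qed

lemma conjugate:
  assumes cd: "composable C d"
    and P: "\<forall>i \<le> length d. \<psi> i \<in> hom C (ob d i) (r i) \<and> iso C (\<psi> i)"
  defines "s \<equiv> map (\<lambda>i. comp C (\<psi> (Suc i)) (comp C (d!i) (inv_arr (\<psi> i)))) [0..<length d]"
  shows "composable C s" "dec_iso C d s" "\<forall>i < length s. s!i \<in> hom C (r i) (r (Suc i))"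
    "length s = length d"
proof -
  show ls: "length s = length d" unfolding s_def by simp
  have snth: "s!i = comp C (\<psi> (Suc i)) (comp C (d!i) (inv_arr (\<psi> i)))" if "i < length d" for i
    using that unfolding s_def by simp
  have dh: "d!i \<in> hom C (ob d i) (ob d (Suc i))" if "i < length d" for i
    using composable_nth_hom[OF cd that] .
  have Pi: "\<psi> i \<in> hom C (ob d i) (r i)" "iso C (\<psi> i)" if "i \<le> length d" for i using P that by auto
  have sh: "s!i \<in> hom C (r i) (r (Suc i))" if i: "i < length d" for i
    unfolding snth[OF i]
    by (rule comp_hom[OF comp_hom[OF inv_arr(1)[OF Pi(2,1)] dh] Pi(1)]) (use i in auto)
  show "\<forall>i < length s. s!i \<in> hom C (r i) (r (Suc i))" using sh ls by auto
  have dne: "d \<noteq> []" using cd unfolding composable_def by auto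
  show "composable C s" unfolding composable_def
  proof (intro conjI allI impI)
    show "s \<noteq> []" using ls dne by auto
    show "set s \<subseteq> Ar C" using sh ls by (auto simp: in_set_conv_nth hom_iff)
    fix i assume "Suc i < length s"
    then show "cod C (s ! i) = dom C (s ! Suc i)" using sh[of i] sh[of "Suc i"] ls by (auto simp: hom_iff)
  qed
  have obs: "ob s i = r i" if "i \<le> length d" for i
  proof (cases i)
    case 0 then show ?thesis using sh[of 0] dne by (auto simp: hom_iff ob_0)
  next
    case (Suc j) then show ?thesis using sh[of j] that by (auto simp: hom_iff ob_Suc)
  qed
  have "comp C (\<psi> (Suc i)) (d ! i) = comp C (s ! i) (\<psi> i)" if i: "i < length d" for i
  proof -
    note I = inv_arr[OF Pi(2,1)[of i]]
    have A: "\<psi> i \<in> hom C (ob d i) (r i)" and B: "\<psi> (Suc i) \<in> hom C (ob d (Suc i)) (r (Suc i))"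
      using Pi i by auto
    have "comp C (s ! i) (\<psi> i) = comp C (\<psi> (Suc i)) (comp C (d!i) (comp C (inv_arr (\<psi> i)) (\<psi> i)))"
      unfolding snth[OF i] using assoc[OF A comp_hom[OF I(1) dh[OF i]] B] assoc[OF A I(1) dh[OF i]] i
      by simp
    then show ?thesis using I(2) id_r dh[OF i] i by simp
  qed
  then show "dec_iso C d s" unfolding dec_iso_alt using ls P obs by auto
qed

lemma PD_D: "d \<in> PD_n C n f \<Longrightarrow> d \<in> D C n f"
  unfolding PD_n_def by (auto split: if_splits)

lemma D_composable: "d \<in> D C n f \<Longrightarrow> composable C d \<and> length d = n"
  unfolding D_def by auto

lemma PD_iff: "d \<in> PD C f \<longleftrightarrow> (\<exists>n \<ge> 1. d \<in> PD_n C n f)"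
  unfolding PD_def by auto

lemma PD_composable: "d \<in> PD C f \<Longrightarrow> composable C d"
  using PD_iff PD_D D_composable by blast

lemma equiv_PD_rel: "equiv (PD C f) (PD_rel C f)"
proof (rule equivI)
  show "PD_rel C f \<subseteq> PD C f \<times> PD C f" unfolding PD_rel_def by auto
  show "refl_on (PD C f) (PD_rel C f)"
    unfolding refl_on_def PD_rel_def using dec_iso_refl PD_composable by blast
  show "sym (PD_rel C f)"
    unfolding sym_def PD_rel_def using dec_iso_sym PD_composable by blast
  show "trans (PD_rel C f)"
    unfolding trans_def PD_rel_def using dec_iso_trans PD_composable by blast
qed

subsection \<open>From isocyclic and essentially locally finite to essentially finite decomposition\<close>

lemma finite_representatives:
  assumes M: "M \<subseteq> Ob C" and fin: "finite (M // obj_iso_rel C)"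
  obtains Reps rep where "finite Reps" "Reps \<subseteq> Ob C"
    "\<And>z. z \<in> M \<Longrightarrow> rep z \<in> Reps \<and> obj_iso C z (rep z)"
proof -
  define rep where "rep z = (SOME w. w \<in> obj_iso_rel C `` {z})" for z
  have rep: "obj_iso C z (rep z)" if "z \<in> M" for z
  proof -
    have "z \<in> obj_iso_rel C `` {z}" using equiv_class_self[OF equiv_obj_iso] that M by blast
    then have "rep z \<in> obj_iso_rel C `` {z}" unfolding rep_def by (rule someI)
    then show ?thesis using obj_iso_rel_iff by blast
  qed
  have "rep ` M \<subseteq> (\<lambda>K. SOME w. w \<in> K) ` (M // obj_iso_rel C)"
    unfolding rep_def using quotientI[of _ M "obj_iso_rel C"] by blast
  then have "finite (rep ` M)" using fin finite_surj by blast
  moreover have "rep ` M \<subseteq> Ob C" using rep obj_iso_ob by blast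
  ultimately show ?thesis using that[of "rep ` M" rep] rep by blast
qed

lemma decomposition_objects_between:
  assumes d: "d \<in> D C n f" and i: "i \<le> n"
  shows "ob d i \<in> {z \<in> Ob C. hom C (dom C f) z \<noteq> {} \<and> hom C z (cod C f) \<noteq> {}}"
proof -
  have cd: "composable C d" and ld: "length d = n" using D_composable[OF d] by auto
  have dne: "d \<noteq> []" using cd unfolding composable_def by auto
  obtain \<alpha> \<beta> where A: "\<alpha> \<in> hom C (ob d 0) (dom C f)" "iso C \<alpha>"
    and B: "\<beta> \<in> hom C (ob d n) (cod C f)"
    using d ob_hd[OF dne] ob_last[OF dne] ld unfolding D_def by auto
  obtain g where g: "g \<in> hom C (ob d 0) (ob d i)" using chain_reach[OF cd, of 0 i] i ld by auto
  obtain h where h: "h \<in> hom C (ob d i) (ob d n)" using chain_reach[OF cd, of i n] i ld by auto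
  show ?thesis
    using ob_Ob[OF cd, of i] i ld comp_hom[OF inv_arr(1)[OF A(2,1)] g] comp_hom[OF h B] by auto
qed

text \<open>In an isocyclic category the objects of a chain without isomorphisms are pairwise
  non-isomorphic: an isomorphism x_j \<cong> x_i with i < j closes a cycle through f_(i+1).\<close>
lemma proper_chain_objects_non_iso:
  assumes ic: "isocyclic C" and cd: "composable C d" and ni: "\<forall>g \<in> set d. \<not> iso C g"
    and ij: "i < j" "j \<le> length d"
  shows "\<not> obj_iso C (ob d i) (ob d j)"
proof
  assume "obj_iso C (ob d i) (ob d j)"
  then obtain u where u: "u \<in> hom C (ob d j) (ob d i)" using obj_iso_sym unfolding obj_iso_def by blast
  obtain v where v: "v \<in> hom C (ob d (Suc i)) (ob d j)" using chain_reach[OF cd, of "Suc i" j] ij by auto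
  have di: "d!i \<in> hom C (ob d i) (ob d (Suc i))" using composable_nth_hom[OF cd] ij by simp
  have "ob d i \<in> Ob C" "ob d (Suc i) \<in> Ob C" using ob_Ob[OF cd] ij by auto
  then have "iso C (d!i)"
    using ic[unfolded isocyclic_def, rule_format, OF _ _ di comp_hom[OF v u]] by blast
  then show False using ni ij by auto
qed

lemma proper_chain_length_bound:
  assumes ic: "isocyclic C" and cd: "composable C d" and ni: "\<forall>g \<in> set d. \<not> iso C g"
    and finReps: "finite Reps"
    and rep: "\<And>i. i \<le> length d \<Longrightarrow> rep (ob d i) \<in> Reps \<and> obj_iso C (ob d i) (rep (ob d i))"
  shows "length d + 1 \<le> card Reps"
proof -
  have "rep (ob d i) \<noteq> rep (ob d j)" if ij: "i < j" "j \<le> length d" for i j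
  proof
    assume eq: "rep (ob d i) = rep (ob d j)"
    have "obj_iso C (ob d i) (rep (ob d i))" "obj_iso C (ob d j) (rep (ob d j))"
      using rep[of i] rep[of j] ij by auto
    then have "obj_iso C (ob d i) (ob d j)" using eq obj_iso_sym obj_iso_trans by metis
    then show False using proper_chain_objects_non_iso[OF ic cd ni ij] by blast
  qed
  then have "inj_on (\<lambda>i. rep (ob d i)) {0..length d}"
    by (intro inj_onI) (metis atLeastAtMost_iff linorder_neqE_nat)
  moreover have "(\<lambda>i. rep (ob d i)) ` {0..length d} \<subseteq> Reps" using rep by auto
  ultimately have "card {0..length d} \<le> card Reps" using card_inj_on_le finReps by blast
  then show ?thesis by simp
qed

lemma finite_PD_classes:
  assumes ic: "isocyclic C" and lf: "ess_locally_finite C" and fA: "f \<in> Ar C"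
  shows "finite (PD C f // PD_rel C f)"
proof -
  define M where "M = {z \<in> Ob C. hom C (dom C f) z \<noteq> {} \<and> hom C z (cod C f) \<noteq> {}}"
  have "finite (M // obj_iso_rel C)"
    using lf dom_ob[OF fA] cod_ob[OF fA] unfolding ess_locally_finite_def M_def obj_iso_rel_def
    by blast
  then obtain Reps rep where finReps: "finite Reps" and RepsOb: "Reps \<subseteq> Ob C"
    and rep: "\<And>z. z \<in> M \<Longrightarrow> rep z \<in> Reps \<and> obj_iso C z (rep z)"
    using finite_representatives[of M] unfolding M_def by blast
  define H where "H = (\<Union>a \<in> Reps. \<Union>b \<in> Reps. hom C a b)"
  have "finite H" unfolding H_def
    using finReps RepsOb lf unfolding ess_locally_finite_def by blast
  then have finS: "finite {s. set s \<subseteq> H \<and> length s \<le> card Reps + 1}"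
    using finite_lists_length_le by blast
  have "\<exists>s \<in> {s. set s \<subseteq> H \<and> length s \<le> card Reps + 1}. (d, s) \<in> PD_rel C f"
    if dP: "d \<in> PD C f" for d
  proof -
    obtain n where n1: "n \<ge> 1" and dn: "d \<in> PD_n C n f" using dP PD_iff by blast
    have dD: "d \<in> D C n f" using PD_D[OF dn] .
    have cd: "composable C d" and ld: "length d = n" using D_composable[OF dD] by auto
    have repd: "rep (ob d i) \<in> Reps \<and> obj_iso C (ob d i) (rep (ob d i))" if "i \<le> length d" for i
      using rep decomposition_objects_between[OF dD] that ld unfolding M_def by blast
    define \<psi> where "\<psi> i = (SOME g. g \<in> hom C (ob d i) (rep (ob d i)) \<and> iso C g)" for i
    have \<psi>: "\<forall>i \<le> length d. \<psi> i \<in> hom C (ob d i) (rep (ob d i)) \<and> iso C (\<psi> i)"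
      unfolding \<psi>_def using repd unfolding obj_iso_def by (metis (no_types, lifting) someI_ex)
    define s where "s = map (\<lambda>i. comp C (\<psi> (Suc i)) (comp C (d!i) (inv_arr (\<psi> i)))) [0..<length d]"
    note cj = conjugate[OF cd \<psi>, folded s_def]
    have "s \<in> PD C f" using PD_n_transport[OF dn cj(1,2) fA] n1 PD_iff by blast
    moreover have "set s \<subseteq> H"
      using cj(3,4) repd unfolding H_def by (auto simp: in_set_conv_nth) (metis Suc_leI less_imp_le_nat)
    moreover have "length s \<le> card Reps + 1"
    proof (cases "n = 1")
      case False
      then have "\<forall>g \<in> set d. \<not> iso C g" using dn unfolding PD_n_def by auto
      then show ?thesis using proper_chain_length_bound[OF ic cd _ finReps repd] cj(4) by simp
    qed (use cj(4) ld in simp)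
    ultimately show ?thesis using dP cj(2) unfolding PD_rel_def by blast
  qed
  then have "\<forall>d \<in> PD C f. \<exists>s \<in> {s. set s \<subseteq> H \<and> length s \<le> card Reps + 1}. (d, s) \<in> PD_rel C f"
    by blast
  then show ?thesis by (rule finite_quotient_by_representatives[OF equiv_PD_rel finS])
qed

subsection \<open>From essentially finite decomposition to isocyclic\<close>

lemma arr_iso_refl: "a \<in> Ar C \<Longrightarrow> arr_iso a a"
  unfolding arr_iso_def using arrow_hom id_hom id_l id_r iso_id dom_ob cod_ob by metis

lemma chain_in_PD:
  assumes cd: "composable C d" and ni: "\<forall>g \<in> set d. \<not> iso C g"
  shows "d \<in> PD C (composite C d)"
proof -
  have "composite C d \<in> Ar C"
    using composite_hom[OF cd] by (simp add: hom_iff)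
  then have "d \<in> D C (length d) (composite C d)"
    using D_iff cd arr_iso_refl by blast
  moreover have "length d \<ge> 1" using cd unfolding composable_def by (simp add: Suc_le_eq)
  ultimately show ?thesis using ni unfolding PD_def PD_n_def by auto
qed

lemma epow_hom: "e \<in> hom C w w \<Longrightarrow> w \<in> Ob C \<Longrightarrow> epow C e w k \<in> hom C w w"
  by (induction k) (auto intro: id_hom comp_hom)

lemma epow_add: assumes e: "e \<in> hom C w w" "w \<in> Ob C"
  shows "epow C e w (j + k) = comp C (epow C e w j) (epow C e w k)"
proof (induction k)
  case 0 then show ?case using id_r[OF epow_hom[OF e, of j]] by simp
next
  case (Suc k)
  then show ?case using assoc[OF e(1) epow_hom[OF e, of k] epow_hom[OF e, of j]] by simp
qed

lemma epow_period: assumes e: "e \<in> hom C w w" "w \<in> Ob C" and eq: "epow C e w a = epow C e w (a + p)"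
  shows "epow C e w (a + t * p) = epow C e w a"
proof (induction t)
  case 0 then show ?case by simp
next
  case (Suc t)
  have "epow C e w (a + Suc t * p) = epow C e w (p + (a + t * p))" by (simp add: algebra_simps)
  also have "\<dots> = comp C (epow C e w p) (epow C e w a)" using epow_add[OF e] Suc by simp
  also have "\<dots> = epow C e w (p + a)" using epow_add[OF e] by simp
  finally show ?case using eq by (simp add: add.commute)
qed


lemma eventually_periodic_powers:
  assumes e: "e \<in> hom C w w" "w \<in> Ob C" and fin: "finite (hom C w w)"
  obtains a p where "a \<ge> 1" "p \<ge> 1" "epow C e w a = epow C e w (a + p)"
proof -
  have "\<not> inj_on (epow C e w) {1..}"
  proof
    assume "inj_on (epow C e w) {1..}"
    moreover have "epow C e w ` {1..} \<subseteq> hom C w w" using epow_hom[OF e] by auto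
    ultimately have "finite ({1..} :: nat set)" using fin finite_imageD finite_subset by metis
    then show False using infinite_Ici[of "1::nat"] by simp
  qed
  then obtain a b where ab: "a \<ge> 1" "b \<ge> 1" "a < b" "epow C e w a = epow C e w b"
    unfolding inj_on_def by (metis atLeast_iff linorder_neqE_nat)
  then show ?thesis using that[of a "b - a"] by auto
qed

lemma composite_replicate: "e \<in> hom C w w \<Longrightarrow> composite C (replicate (Suc k) e) = epow C e w (Suc k)"
  by (induction k) (simp_all add: id_l)

lemma composable_replicate: "e \<in> hom C w w \<Longrightarrow> k \<ge> 1 \<Longrightarrow> composable C (replicate k e)"
  unfolding composable_def by (auto simp: hom_iff)

text \<open>A non-invertible endomorphism with finitely many powers gives some arrow infinitely
  many non-isomorphic proper decompositions: the constant chains [e, ..., e] of all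
  lengths a + t p decompose e^a.\<close>
lemma non_iso_endo_infinite_decompositions:
  assumes e: "e \<in> hom C w w" "w \<in> Ob C" and ne: "\<not> iso C e" and fin: "finite (hom C w w)"
  shows "\<exists>h \<in> Ar C. infinite (PD C h // PD_rel C h)"
proof -
  obtain a p where ap: "a \<ge> 1" "p \<ge> 1" "epow C e w a = epow C e w (a + p)"
    using eventually_periodic_powers[OF e fin] .
  define h where "h = epow C e w a"
  define K where "K = range (\<lambda>t. a + t * p)"
  have "inj (\<lambda>t. a + t * p)" by (rule injI) (use ap in simp)
  then have infK: "infinite K" unfolding K_def using finite_imageD infinite_UNIV_nat by blast
  have inPD: "replicate k e \<in> PD C h" if "k \<in> K" for k
  proof -
    obtain t where t: "k = a + t * p" using \<open>k \<in> K\<close> unfolding K_def by auto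
    then have k1: "k \<ge> 1" using ap by simp
    then obtain k' where k': "k = Suc k'" by (cases k) auto
    have "composite C (replicate k e) = epow C e w k" using composite_replicate[OF e(1), of k'] k' by simp
    also have "\<dots> = h" unfolding h_def t by (rule epow_period[OF e ap(3)])
    finally have "composite C (replicate k e) = h" .
    moreover have "replicate k e \<in> PD C (composite C (replicate k e))"
      using chain_in_PD[OF composable_replicate[OF e(1) k1]] ne by simp
    ultimately show ?thesis by simp
  qed
  have inj: "inj_on (\<lambda>k. PD_rel C h `` {replicate k e}) K"
  proof (rule inj_onI)
    fix k k' assume k': "k' \<in> K"
      and eq: "PD_rel C h `` {replicate k e} = PD_rel C h `` {replicate k' e}"
    have "replicate k' e \<in> PD_rel C h `` {replicate k e}"
      using equiv_class_self[OF equiv_PD_rel inPD[OF k']] eq by simp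
    then have "dec_iso C (replicate k e) (replicate k' e)" unfolding PD_rel_def by simp
    then have "length (replicate k e) = length (replicate k' e)" unfolding dec_iso_def by (elim conjE)
    then show "k = k'" by simp
  qed
  have sub: "(\<lambda>k. PD_rel C h `` {replicate k e}) ` K \<subseteq> PD C h // PD_rel C h"
    by (rule image_subsetI) (rule quotientI[OF inPD])
  have "infinite (PD C h // PD_rel C h)"
  proof
    assume "finite (PD C h // PD_rel C h)"
    then have "finite ((\<lambda>k. PD_rel C h `` {replicate k e}) ` K)" using sub finite_subset by blast
    then show False using finite_imageD[OF _ inj] infK by blast
  qed
  moreover have "h \<in> Ar C" using epow_hom[OF e] unfolding h_def by (simp add: hom_iff)
  ultimately show ?thesis by blast
qed

text \<open>If every endomorphism is invertible, the category is isocyclic: for x \<rightarrow> y \<rightarrow> x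
  both composites are invertible, so each arrow has a left and a right inverse.\<close>
lemma isocyclic_if_endos_iso:
  assumes "\<And>w e. w \<in> Ob C \<Longrightarrow> e \<in> hom C w w \<Longrightarrow> iso C e"
  shows "isocyclic C"
  unfolding isocyclic_def
proof (intro ballI)
  fix x y f g assume "x \<in> Ob C" "y \<in> Ob C" "f \<in> hom C x y" "g \<in> hom C y x"
  moreover from this have "iso C (comp C g f)" "iso C (comp C f g)"
    using assms comp_hom by blast+
  ultimately show "iso C f \<and> iso C g" using iso_from_both by blast
qed

lemma isocyclic_if_finite_PD_classes:
  assumes efd: "\<forall>h \<in> Ar C. finite (PD C h // PD_rel C h)"
    and fin: "\<forall>x \<in> Ob C. \<forall>y \<in> Ob C. finite (hom C x y)"
  shows "isocyclic C"
  using non_iso_endo_infinite_decompositions efd fin isocyclic_if_endos_iso by blast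

subsection \<open>From essentially finite decomposition to essentially locally finite\<close>

lemma dec_iso_obj_iso: "dec_iso C d e \<Longrightarrow> i \<le> length d \<Longrightarrow> obj_iso C (ob d i) (ob e i)"
  unfolding dec_iso_alt obj_iso_def by blast

text \<open>The class of the middle object z of a factorisation x \<rightarrow> z \<rightarrow> y by non-isomorphisms
  is determined by the class of the proper 2-decomposition [a, b]; hence the classes of
  such middle objects are bounded by the classes of decompositions of arrows x \<rightarrow> y.\<close>
lemma middle_object_class:
  assumes a: "a \<in> hom C x z" and b: "b \<in> hom C z y" and ni: "\<not> iso C a" "\<not> iso C b"
  defines "L \<equiv> PD_rel C (comp C b a) `` {[a, b]}"
  shows "L \<in> PD C (comp C b a) // PD_rel C (comp C b a)"
    and "obj_iso_rel C `` {z} = obj_iso_rel C `` {ob (SOME e. e \<in> L) 1}"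
proof -
  have cd: "composable C [a, b]" using a b composable_Cons[of a "[b]"] composable_Cons[of b "[]"]
    by (auto simp: hom_iff)
  have dP: "[a, b] \<in> PD C (comp C b a)" using chain_in_PD[OF cd] ni by simp
  then show "L \<in> PD C (comp C b a) // PD_rel C (comp C b a)" unfolding L_def by (rule quotientI)
  have "[a, b] \<in> L" unfolding L_def using equiv_class_self[OF equiv_PD_rel dP] .
  then have "(SOME e. e \<in> L) \<in> L" by (rule someI)
  then have "dec_iso C [a, b] (SOME e. e \<in> L)" unfolding L_def PD_rel_def by blast
  then have "obj_iso C (ob [a, b] 1) (ob (SOME e. e \<in> L) 1)" using dec_iso_obj_iso by simp
  moreover have "ob [a, b] 1 = z" using a by (simp add: ob_def hom_iff)
  ultimately show "obj_iso_rel C `` {z} = obj_iso_rel C `` {ob (SOME e. e \<in> L) 1}"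
    using equiv_class_eq[OF equiv_obj_iso] obj_iso_rel_iff by metis
qed

lemma locally_finite_if_finite_PD_classes:
  assumes efd: "\<forall>h \<in> Ar C. finite (PD C h // PD_rel C h)"
    and fin: "\<forall>x \<in> Ob C. \<forall>y \<in> Ob C. finite (hom C x y)" and ic: "isocyclic C"
  shows "ess_locally_finite C"
  unfolding ess_locally_finite_def obj_iso_rel_def[symmetric]
proof (intro conjI ballI impI)
  fix x y assume x: "x \<in> Ob C" and y: "y \<in> Ob C"
  show "finite (hom C x y)" using fin x y by blast
  show "obj_iso C x y" if "hom C x y \<noteq> {}" "hom C y x \<noteq> {}"
    using that ic x y unfolding isocyclic_def obj_iso_def by blast
  define Z where "Z = {z \<in> Ob C. hom C x z \<noteq> {} \<and> hom C z y \<noteq> {}}"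
  define mid where "mid L = obj_iso_rel C `` {ob (SOME e. e \<in> L) 1}" for L
  have "Z // obj_iso_rel C \<subseteq> {obj_iso_rel C `` {x}, obj_iso_rel C `` {y}} \<union>
      (\<Union>h \<in> hom C x y. mid ` (PD C h // PD_rel C h))"
  proof
    fix K assume "K \<in> Z // obj_iso_rel C"
    then obtain z where K: "K = obj_iso_rel C `` {z}" and z: "z \<in> Z" by (auto elim: quotientE)
    obtain a b where a: "a \<in> hom C x z" and b: "b \<in> hom C z y" using z unfolding Z_def by blast
    show "K \<in> {obj_iso_rel C `` {x}, obj_iso_rel C `` {y}} \<union> (\<Union>h \<in> hom C x y. mid ` (PD C h // PD_rel C h))"
    proof (cases "iso C a \<or> iso C b")
      case True
      then have "obj_iso C x z \<or> obj_iso C z y" using a b unfolding obj_iso_def by blast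
      then have "K = obj_iso_rel C `` {x} \<or> K = obj_iso_rel C `` {y}"
        using K equiv_class_eq[OF equiv_obj_iso] obj_iso_rel_iff by metis
      then show ?thesis by blast
    next
      case False
      then show ?thesis using middle_object_class[OF a b] K comp_hom[OF a b] unfolding mid_def by blast
    qed
  qed
  moreover have "finite (PD C h // PD_rel C h)" if "h \<in> hom C x y" for h
    using efd that by (simp add: hom_iff)
  then have "finite ({obj_iso_rel C `` {x}, obj_iso_rel C `` {y}} \<union>
      (\<Union>h \<in> hom C x y. mid ` (PD C h // PD_rel C h)))"
    using fin x y by auto
  ultimately show "finite (Z // obj_iso_rel C)" using finite_subset by blast
qed

end

lemma ess_finite_decomposition_iff:
  "ess_finite_decomposition C \<longleftrightarrow> (\<forall>f \<in> Ar C. finite (PD C f // PD_rel C f))"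
  unfolding ess_finite_decomposition_def PD_rel_def ..

theorem theorem8p1:
  fixes C :: "('o, 'm) cat"
  assumes "category C"
    and "\<forall>x \<in> Ob C. \<forall>y \<in> Ob C. finite (hom C x y)"
  shows "ess_finite_decomposition C \<longleftrightarrow> isocyclic C \<and> ess_locally_finite C"
proof -
  interpret category_ctx C by unfold_locales (rule assms(1))
  show ?thesis
  proof
    assume "ess_finite_decomposition C"
    then have efd: "\<forall>f \<in> Ar C. finite (PD C f // PD_rel C f)"
      unfolding ess_finite_decomposition_iff .
    then have "isocyclic C" using isocyclic_if_finite_PD_classes assms(2) by blast
    then show "isocyclic C \<and> ess_locally_finite C"
      using locally_finite_if_finite_PD_classes[OF efd assms(2)] by blast
  next
    assume "isocyclic C \<and> ess_locally_finite C"
    then show "ess_finite_decomposition C"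
      unfolding ess_finite_decomposition_iff using finite_PD_classes by blast
  qed
qed

end
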